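(* Let $J=S\Upsilon_1S^{-1}=\bar S\Upsilon_2^\top\bar S^{-1}$. Then for $a=1,\dots,p_1$, $b=1,\dots,p_2$, $$J\mathcal A_a(z)=z\mathcal A_a(z),\quad J^\top\bar{\mathcal A}_b(z)=z\bar{\mathcal A}_b(z),\quad J\mathcal C_b(z)=z\mathcal C_b(z)-c_b,\quad J^\top\bar{\mathcal C}_a(z)=z\bar{\mathcal C}_a(z)-\bar c_a .$$
   Context: Setting: $\mu$ finite Borel measure on an interval, weights $w_{1,a}$ ($a\le p_1$), $w_{2,b}$ ($b\le p_2$), compositions $\vec n_\ell\in\mathbb N^{p_\ell}$; each $i\in\mathbb Z_+$ is uniquely $i=q|\vec n_\ell|+n_{\ell,1}+\dots+n_{\ell,a-1}+r$ ($0\le r<n_{\ell,a}$), $a_\ell(i)=a$, $k_\ell(i)=qn_{\ell,a}+r$; moment matrix $g_{i,j}=\int x^{k_1(i)+k_2(j)}w_{1,a_1(i)}w_{2,a_2(j)}d\mu$, assumed to have Gauss–Borel factorization $g=S^{-1}\bar S$ ($S$ unit lower triangular, $\bar S$ upper triangular invertible). $e_{\ell,a}(k)=e_i$ with $a_\ell(i)=a,k_\ell(i)=k$; $\Lambda_{\ell,a}=\sum_ke_{\ell,a}(k)e_{\ell,a}(k+1)^\top$, $\Upsilon_\ell=\sum_a\Lambda_{\ell,a}$. $\chi_{\ell,a}(z)=\sum_ke_{\ell,a}(k)z^k$ and $\chi^*_{\ell,a}(z)=z^{-1}\chi_{\ell,a}(z^{-1})$. Strings of polynomials $\mathcal A_a=S\chi_{1,a}$,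 $\bar{\mathcal A}_b=(\bar S^{-1})^\top\chi_{2,b}$; strings of second kind functions (formal series in $z^{-1}$) $\mathcal C_b=\bar S\chi^*_{2,b}(z)$, $\bar{\mathcal C}_a=(S^{-1})^\top\chi^*_{1,a}(z)$; vectors $c_b=\bar Se_{2,b}(0)$, $\bar c_a=(S^{-1})^\top e_{1,a}(0)$. *)

theory Defs
  imports "HOL-Analysis.Analysis" "HOL-Computational_Algebra.Polynomial"
          "HOL-Computational_Algebra.Formal_Laurent_Series"
begin

text \<open>Semi-infinite matrices are functions nat => nat => real (row index, column index);
  semi-infinite vectors are functions on nat.  Indices of the multi-index
  composition run over 1..p.\<close>

type_synonym smat = "nat \<Rightarrow> nat \<Rightarrow> real"

definition comp_size :: "(nat \<Rightarrow> nat) \<Rightarrow> nat \<Rightarrow> nat" where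
  "comp_size n p = (\<Sum>a\<in>{1..p}. n a)"

definition decomp :: "(nat \<Rightarrow> nat) \<Rightarrow> nat \<Rightarrow> nat \<Rightarrow> nat \<times> nat \<times> nat" where
  "decomp n p i = (THE (q, a, r). 1 \<le> a \<and> a \<le> p \<and> r < n a \<and>
      i = q * comp_size n p + (\<Sum>b\<in>{1..<a}. n b) + r)"

definition aidx :: "(nat \<Rightarrow> nat) \<Rightarrow> nat \<Rightarrow> nat \<Rightarrow> nat" where
  "aidx n p i = fst (snd (decomp n p i))"

definition kidx :: "(nat \<Rightarrow> nat) \<Rightarrow> nat \<Rightarrow> nat \<Rightarrow> nat" where
  "kidx n p i = (case decomp n p i of (q, a, r) \<Rightarrow> q * n a + r)"

text \<open>e_a(k) = e_i where a(i) = a and k(i) = k; we record the index i.\<close>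
definition eidx :: "(nat \<Rightarrow> nat) \<Rightarrow> nat \<Rightarrow> nat \<Rightarrow> nat \<Rightarrow> nat" where
  "eidx n p a k = (THE i. aidx n p i = a \<and> kidx n p i = k)"

text \<open>Lambda_a = sum_k e_a(k) e_a(k+1)^T, Upsilon = sum_a Lambda_a.\<close>
definition Lam :: "(nat \<Rightarrow> nat) \<Rightarrow> nat \<Rightarrow> nat \<Rightarrow> smat" where
  "Lam n p a i j = (if \<exists>k. i = eidx n p a k \<and> j = eidx n p a (Suc k) then 1 else 0)"

definition Ups :: "(nat \<Rightarrow> nat) \<Rightarrow> nat \<Rightarrow> smat" where
  "Ups n p i j = (\<Sum>a\<in>{1..p}. Lam n p a i j)"

definition smat_transpose :: "smat \<Rightarrow> smat" where
  "smat_transpose M i j = M j i"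

definition smat_id :: smat where
  "smat_id i j = (if i = j then 1 else 0)"

text \<open>Product of semi-infinite matrices: sum over the (finitely many, in all uses)
  indices k with nonzero contribution.\<close>
definition smat_mult :: "smat \<Rightarrow> smat \<Rightarrow> smat" where
  "smat_mult A B i j = (\<Sum>k\<in>{k. A i k \<noteq> 0 \<and> B k j \<noteq> 0}. A i k * B k j)"

definition lower_tri :: "smat \<Rightarrow> bool" where
  "lower_tri M \<longleftrightarrow> (\<forall>i j. i < j \<longrightarrow> M i j = 0)"

definition upper_tri :: "smat \<Rightarrow> bool" where
  "upper_tri M \<longleftrightarrow> (\<forall>i j. j < i \<longrightarrow> M i j = 0)"

definition mv_poly :: "smat \<Rightarrow> (nat \<Rightarrow> real poly) \<Rightarrow> nat \<Rightarrow> real poly" where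
  "mv_poly M v i = (\<Sum>k\<in>{k. M i k \<noteq> 0 \<and> v k \<noteq> 0}. smult (M i k) (v k))"

text \<open>Matrix acting (coefficientwise) on a vector of formal power series in w = z^(-1).\<close>
definition mv_fps :: "smat \<Rightarrow> (nat \<Rightarrow> real fps) \<Rightarrow> nat \<Rightarrow> real fps" where
  "mv_fps M v i = Abs_fps (\<lambda>m. \<Sum>k\<in>{k. M i k \<noteq> 0 \<and> v k $ m \<noteq> 0}. M i k * (v k $ m))"

definition chi :: "(nat \<Rightarrow> nat) \<Rightarrow> nat \<Rightarrow> nat \<Rightarrow> nat \<Rightarrow> real poly" where
  "chi n p a i = (if aidx n p i = a then monom 1 (kidx n p i) else 0)"

text \<open>chi*_a(z) = z^(-1) chi_a(z^(-1)) = sum_k e_a(k) z^(-k-1), a vector of formal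
  power series in w = z^(-1) (entry w^(k+1)).\<close>
definition chistar :: "(nat \<Rightarrow> nat) \<Rightarrow> nat \<Rightarrow> nat \<Rightarrow> nat \<Rightarrow> real fps" where
  "chistar n p a i = (if aidx n p i = a then fps_X ^ (Suc (kidx n p i)) else 0)"

end

theory Submission
  imports Defs
begin

text \<open>The moment matrix is of block Hankel type: its entry depends on the indices only through
  the labels $a_1(i), a_2(j)$ and the sum $k_1(i) + k_2(j)$. Hence shifting rows with
  $\Upsilon_1$ equals shifting columns with $\Upsilon_2^\top$, i.e. $\Upsilon_1 g = g \Upsilon_2^\top$,
  and substituting $g = S^{-1}\bar S$ shows that $S\Upsilon_1S^{-1} = \bar S\Upsilon_2^\top\bar S^{-1}$.
  The four spectral relations are then conjugates of $\Upsilon_1\chi_{1,a} = z\chi_{1,a}$ and of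
  $\Upsilon_2^\top\chi^*_{2,b} = z\chi^*_{2,b} - e_{2,b}(0)$.\<close>

section \<open>Indexing by a composition\<close>

definition comp_offset :: "(nat \<Rightarrow> nat) \<Rightarrow> nat \<Rightarrow> nat" where
  "comp_offset n a = (\<Sum>b\<in>{1..<a}. n b)"

lemma comp_offset_Suc: "1 \<le> a \<Longrightarrow> comp_offset n (Suc a) = comp_offset n a + n a"
  unfolding comp_offset_def by (simp add: atLeastLessThanSuc add.commute)

lemma comp_offset_mono:
  assumes "1 \<le> a" "a < a'"
  shows "comp_offset n a + n a \<le> comp_offset n a'"
proof -
  have "{1..<a'} = {1..<a} \<union> {a..<a'}" using assms by auto
  hence "comp_offset n a' = comp_offset n a + (\<Sum>b\<in>{a..<a'}. n b)"
    unfolding comp_offset_def by (simp add: sum.union_disjoint ivl_disj_int)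
  moreover have "n a \<le> (\<Sum>b\<in>{a..<a'}. n b)"
    using assms by (intro member_le_sum) auto
  ultimately show ?thesis by simp
qed

lemma comp_size_eq_comp_offset: "comp_size n p = comp_offset n (Suc p)"
  unfolding comp_size_def comp_offset_def by (simp add: atLeastLessThanSuc_atLeastAtMost)

lemma comp_offset_less_comp_size:
  assumes "1 \<le> a" "a \<le> p" "r < n a"
  shows "comp_offset n a + r < comp_size n p"
  using assms comp_offset_Suc[of a n] comp_offset_mono[of a "Suc p" n]
  by (cases "a = p") (auto simp: comp_size_eq_comp_offset)

lemma decomp_unique:
  assumes "1 \<le> a" "a \<le> p" "r < n a" "1 \<le> a'" "a' \<le> p" "r' < n a'"
    and eq: "q * comp_size n p + comp_offset n a + r = q' * comp_size n p + comp_offset n a' + r'"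
  shows "q = q' \<and> a = a' \<and> r = r'"
proof -
  let ?N = "comp_size n p"
  have "comp_offset n a + r < ?N" "comp_offset n a' + r' < ?N"
    using comp_offset_less_comp_size assms by auto
  moreover have "(q * ?N + (comp_offset n a + r)) div ?N = (q' * ?N + (comp_offset n a' + r')) div ?N"
    "(q * ?N + (comp_offset n a + r)) mod ?N = (q' * ?N + (comp_offset n a' + r')) mod ?N"
    using eq by (simp_all add: add.assoc)
  ultimately have q: "q = q'" and s: "comp_offset n a + r = comp_offset n a' + r'" by auto
  have "a = a'"
    using comp_offset_mono[of a a' n] comp_offset_mono[of a' a n] assms s
    by (cases a a' rule: linorder_cases) auto
  with q s show ?thesis by simp
qed

lemma decomp_eq:
  assumes "1 \<le> a" "a \<le> p" "r < n a"
  shows "decomp n p (q * comp_size n p + comp_offset n a + r) = (q, a, r)"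
  unfolding decomp_def
proof (rule the_equality)
  fix x assume "case x of (q', a', r') \<Rightarrow> 1 \<le> a' \<and> a' \<le> p \<and> r' < n a' \<and>
      q * comp_size n p + comp_offset n a + r = q' * comp_size n p + (\<Sum>b\<in>{1..<a'}. n b) + r'"
  moreover obtain q' a' r' where "x = (q', a', r')" by (cases x)
  ultimately show "x = (q, a, r)"
    using decomp_unique[of a p r n a' r' q q'] assms by (simp add: comp_offset_def)
qed (use assms in \<open>simp add: comp_offset_def\<close>)

locale composition =
  fixes n :: "nat \<Rightarrow> nat" and p :: nat
  assumes length_pos: "p \<ge> 1" and parts_pos: "\<forall>a\<in>{1..p}. n a \<ge> 1"
begin

lemma decomp_exists:
  "\<exists>q a r. 1 \<le> a \<and> a \<le> p \<and> r < n a \<and> i = q * comp_size n p + comp_offset n a + r"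
proof -
  let ?N = "comp_size n p"
  define q where "q = i div ?N"
  define s where "s = i mod ?N"
  define A where "A = {a\<in>{1..p}. comp_offset n a \<le> s}"
  define a where "a = Max A"
  have "1 \<in> A" "finite A"
    unfolding A_def comp_offset_def using length_pos by auto
  hence aA: "a \<in> A" unfolding a_def by (intro Max_in) auto
  have "n 1 \<ge> 1" using parts_pos length_pos by auto
  hence "?N > 0"
    using comp_offset_mono[of 1 "Suc p" n] length_pos by (simp add: comp_size_eq_comp_offset)
  hence "s < ?N" unfolding s_def by simp
  have r: "s - comp_offset n a < n a"
  proof (cases "a = p")
    case True
    thus ?thesis using aA comp_offset_Suc[of a n] \<open>s < ?N\<close>
      by (auto simp: A_def comp_size_eq_comp_offset)
  next
    case False
    hence "Suc a \<notin> A" using \<open>finite A\<close> unfolding a_def by (metis Max_ge Suc_n_not_le_n)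
    hence "comp_offset n (Suc a) > s" using aA False unfolding A_def by auto
    thus ?thesis using comp_offset_Suc[of a n] aA unfolding A_def by auto
  qed
  have "i = q * ?N + comp_offset n a + (s - comp_offset n a)"
    using aA div_mult_mod_eq[of i ?N] unfolding A_def s_def q_def by simp
  moreover have "1 \<le> a" "a \<le> p" using aA unfolding A_def by auto
  ultimately show ?thesis
    using r by blast
qed

lemma decompE:
  obtains q a r where "1 \<le> a" "a \<le> p" "r < n a"
    "i = q * comp_size n p + comp_offset n a + r" "decomp n p i = (q, a, r)"
  using decomp_exists[of i] decomp_eq by blast

lemma aidx_range: "aidx n p i \<in> {1..p}"
  by (rule decompE[of i]) (simp add: aidx_def)

lemma eidx_eq_iff:
  assumes a: "a \<in> {1..p}"
  shows "i = eidx n p a k \<longleftrightarrow> aidx n p i = a \<and> kidx n p i = k"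
proof -
  let ?N = "comp_size n p"
  define i0 where "i0 = (k div n a) * ?N + comp_offset n a + k mod n a"
  have na: "n a > 0" using parts_pos a by fastforce
  hence "decomp n p i0 = (k div n a, a, k mod n a)"
    unfolding i0_def using a by (intro decomp_eq) auto
  hence i0: "aidx n p i0 = a \<and> kidx n p i0 = k"
    by (simp add: aidx_def kidx_def)
  have unique: "i = i0" if "aidx n p i = a \<and> kidx n p i = k" for i
  proof -
    obtain q a' r where h: "r < n a'" "i = q * ?N + comp_offset n a' + r" "decomp n p i = (q, a', r)"
      by (rule decompE[of i])
    with that have "a' = a" and "k = r + q * n a"
      by (auto simp: aidx_def kidx_def)
    with h na have "q = k div n a" "r = k mod n a"
      by simp_all
    with h \<open>a' = a\<close> show ?thesis unfolding i0_def by simp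
  qed
  have "eidx n p a k = i0"
    unfolding eidx_def
    by (rule the_equality[where P = "\<lambda>i. aidx n p i = a \<and> kidx n p i = k", OF i0 unique])
  with i0 unique show ?thesis by metis
qed

lemma aidx_eidx: "a \<in> {1..p} \<Longrightarrow> aidx n p (eidx n p a k) = a"
  and kidx_eidx: "a \<in> {1..p} \<Longrightarrow> kidx n p (eidx n p a k) = k"
  using eidx_eq_iff[of a "eidx n p a k" k] by simp_all

lemma eidx_aidx_kidx: "eidx n p (aidx n p i) (kidx n p i) = i"
  using eidx_eq_iff[OF aidx_range, of i i "kidx n p i"] by simp

end

section \<open>Semi-infinite matrices\<close>

text \<open>Since smat_mult sums over the support of the products, it silently yields 0 when
  that support is infinite; associativity therefore needs finite rows or finite columns.\<close>

definition row_finite :: "smat \<Rightarrow> bool" where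
  "row_finite A \<longleftrightarrow> (\<forall>i. finite {k. A i k \<noteq> 0})"

definition col_finite :: "smat \<Rightarrow> bool" where
  "col_finite A \<longleftrightarrow> (\<forall>j. finite {k. A k j \<noteq> 0})"

lemma smat_mult_eq_sum:
  assumes "finite F" "\<And>k. A i k \<noteq> 0 \<Longrightarrow> B k j \<noteq> 0 \<Longrightarrow> k \<in> F"
  shows "smat_mult A B i j = (\<Sum>k\<in>F. A i k * B k j)"
  unfolding smat_mult_def by (rule sum.mono_neutral_left) (use assms in auto)

lemma smat_transpose_mult:
  "smat_transpose (smat_mult A B) = smat_mult (smat_transpose B) (smat_transpose A)"
  unfolding smat_transpose_def smat_mult_def by (intro ext) (simp add: mult.commute conj_commute)

lemma smat_transpose_apply: "smat_transpose A i j = A j i"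
  unfolding smat_transpose_def ..

lemma smat_transpose_transpose [simp]: "smat_transpose (smat_transpose A) = A"
  unfolding smat_transpose_def by simp

lemma smat_transpose_id [simp]: "smat_transpose smat_id = smat_id"
  unfolding smat_transpose_def smat_id_def by (intro ext) auto

lemma col_finite_transpose [simp]: "col_finite (smat_transpose A) \<longleftrightarrow> row_finite A"
  and row_finite_transpose [simp]: "row_finite (smat_transpose A) \<longleftrightarrow> col_finite A"
  unfolding col_finite_def row_finite_def smat_transpose_def by simp_all

lemma row_finite_mult:
  assumes A: "row_finite A" and B: "row_finite B"
  shows "row_finite (smat_mult A B)"
  unfolding row_finite_def
proof
  fix i
  have "{m. smat_mult A B i m \<noteq> 0} \<subseteq> (\<Union>k\<in>{k. A i k \<noteq> 0}. {m. B k m \<noteq> 0})"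
    unfolding smat_mult_def by (force elim: sum.not_neutral_contains_not_neutral)
  moreover have "finite (\<Union>k\<in>{k. A i k \<noteq> 0}. {m. B k m \<noteq> 0})"
    using A B unfolding row_finite_def by auto
  ultimately show "finite {m. smat_mult A B i m \<noteq> 0}" by (rule finite_subset)
qed

lemma col_finite_mult: "col_finite A \<Longrightarrow> col_finite B \<Longrightarrow> col_finite (smat_mult A B)"
  using row_finite_mult[of "smat_transpose B" "smat_transpose A"]
  by (simp flip: col_finite_transpose add: smat_transpose_mult)

lemma smat_mult_assoc_row_finite:
  assumes A: "row_finite A" and B: "row_finite B"
  shows "smat_mult (smat_mult A B) C = smat_mult A (smat_mult B C)"
proof (intro ext)
  fix i j
  define R where "R = {k. A i k \<noteq> 0}"
  define T where "T = (\<Union>k\<in>R. {m. B k m \<noteq> 0})"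
  have fR: "finite R" and fT: "finite T"
    using A B unfolding row_finite_def R_def T_def by auto
  have AB: "smat_mult A B i m = (\<Sum>k\<in>R. A i k * B k m)" for m
    by (rule smat_mult_eq_sum) (use fR R_def in auto)
  have BC: "smat_mult B C k j = (\<Sum>m\<in>T. B k m * C m j)" if "k \<in> R" for k
    by (rule smat_mult_eq_sum) (use fT that T_def in auto)
  have "smat_mult (smat_mult A B) C i j = (\<Sum>m\<in>T. smat_mult A B i m * C m j)"
    by (rule smat_mult_eq_sum[OF fT])
       (force simp: smat_mult_def T_def R_def elim: sum.not_neutral_contains_not_neutral)
  also have "\<dots> = (\<Sum>k\<in>R. \<Sum>m\<in>T. A i k * B k m * C m j)"
    by (simp add: AB sum_distrib_right sum.swap[of _ T])
  also have "\<dots> = (\<Sum>k\<in>R. A i k * smat_mult B C k j)"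
    by (intro sum.cong refl) (simp add: BC sum_distrib_left mult.assoc)
  also have "\<dots> = smat_mult A (smat_mult B C) i j"
    by (rule smat_mult_eq_sum[symmetric]) (use fR R_def in auto)
  finally show "smat_mult (smat_mult A B) C i j = smat_mult A (smat_mult B C) i j" .
qed

lemma smat_mult_assoc_col_finite:
  assumes "col_finite B" "col_finite C"
  shows "smat_mult (smat_mult A B) C = smat_mult A (smat_mult B C)"
  using smat_mult_assoc_row_finite[of "smat_transpose C" "smat_transpose B" "smat_transpose A"] assms
  by (metis smat_transpose_mult smat_transpose_transpose row_finite_transpose)

lemma smat_mult_id_right [simp]: "smat_mult M smat_id = M"
  by (intro ext, subst smat_mult_eq_sum[of "{j}" for j]) (auto simp: smat_id_def split: if_splits)

lemma smat_mult_id_left [simp]: "smat_mult smat_id M = M"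
  by (intro ext, subst smat_mult_eq_sum[of "{i}" for i]) (auto simp: smat_id_def split: if_splits)

lemma lower_tri_row_finite: "lower_tri M \<Longrightarrow> row_finite M"
  unfolding lower_tri_def row_finite_def
  by (auto intro: finite_subset[of _ "{..i}" for i] simp: not_le[symmetric])

lemma upper_tri_col_finite: "upper_tri M \<Longrightarrow> col_finite M"
  unfolding upper_tri_def col_finite_def
  by (auto intro: finite_subset[of _ "{..i}" for i] simp: not_le[symmetric])

lemma conj_eq_if_intertwines:
  assumes S: "row_finite S" "row_finite Sinv" "smat_mult S Sinv = smat_id"
    and Sbar: "col_finite Sbar" "col_finite Sbarinv" "smat_mult Sbar Sbarinv = smat_id"
    and U: "row_finite U" and V: "col_finite V"
    and intertwine: "smat_mult U (smat_mult Sinv Sbar) = smat_mult (smat_mult Sinv Sbar) V"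
  shows "smat_mult (smat_mult S U) Sinv = smat_mult (smat_mult Sbar V) Sbarinv"
proof -
  let ?J = "smat_mult (smat_mult S U) Sinv"
  have "smat_mult ?J Sbar = smat_mult S (smat_mult U (smat_mult Sinv Sbar))"
    using S U by (simp add: row_finite_mult smat_mult_assoc_row_finite)
  also have "\<dots> = smat_mult S (smat_mult Sinv (smat_mult Sbar V))"
    using Sbar V by (simp add: intertwine smat_mult_assoc_col_finite)
  also have "\<dots> = smat_mult Sbar V"
    using S by (simp flip: smat_mult_assoc_row_finite)
  finally have J_Sbar: "smat_mult ?J Sbar = smat_mult Sbar V" .
  have "?J = smat_mult ?J (smat_mult Sbar Sbarinv)"
    using Sbar by simp
  also have "\<dots> = smat_mult (smat_mult Sbar V) Sbarinv"
    unfolding smat_mult_assoc_col_finite[OF Sbar(1,2), symmetric] J_Sbar ..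
  finally show ?thesis .
qed

section \<open>The shift matrices\<close>

definition succ_idx :: "(nat \<Rightarrow> nat) \<Rightarrow> nat \<Rightarrow> nat \<Rightarrow> nat" where
  "succ_idx n p i = eidx n p (aidx n p i) (Suc (kidx n p i))"

definition chi_coeffs :: "(nat \<Rightarrow> nat) \<Rightarrow> nat \<Rightarrow> nat \<Rightarrow> smat" where
  "chi_coeffs n p a i m = (if aidx n p i = a \<and> kidx n p i = m then 1 else 0)"

definition chistar_coeffs :: "(nat \<Rightarrow> nat) \<Rightarrow> nat \<Rightarrow> nat \<Rightarrow> smat" where
  "chistar_coeffs n p a i m = (if aidx n p i = a \<and> m = Suc (kidx n p i) then 1 else 0)"

lemma coeff_chi: "(\<lambda>i. coeff (chi n p a i)) = chi_coeffs n p a"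
  unfolding chi_def chi_coeffs_def by (intro ext) auto

lemma fps_nth_chistar: "(\<lambda>i. fps_nth (chistar n p a i)) = chistar_coeffs n p a"
  unfolding chistar_def chistar_coeffs_def by (intro ext) auto

lemma coeff_mv_poly:
  assumes "row_finite M"
  shows "coeff (mv_poly M v i) m = smat_mult M (\<lambda>k. coeff (v k)) i m"
proof -
  have "finite {k. M i k \<noteq> 0 \<and> v k \<noteq> 0}"
    using assms unfolding row_finite_def by (rule_tac finite_subset[of _ "{k. M i k \<noteq> 0}"]) auto
  thus ?thesis
    unfolding mv_poly_def coeff_sum by (subst smat_mult_eq_sum) auto
qed

lemma fps_nth_mv_fps: "fps_nth (mv_fps M v i) m = smat_mult M (\<lambda>k. fps_nth (v k)) i m"
  unfolding mv_fps_def smat_mult_def by simp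

context composition
begin

lemma aidx_succ_idx [simp]: "aidx n p (succ_idx n p i) = aidx n p i"
  and kidx_succ_idx [simp]: "kidx n p (succ_idx n p i) = Suc (kidx n p i)"
  unfolding succ_idx_def using aidx_eidx kidx_eidx aidx_range by simp_all

lemma inj_succ_idx: "inj (succ_idx n p)"
  by (rule injI) (metis aidx_succ_idx kidx_succ_idx eidx_aidx_kidx nat.inject)

lemma Ups_eq: "Ups n p i j = (if j = succ_idx n p i then 1 else 0)"
proof -
  have Lam: "Lam n p a i j = (if a = aidx n p i \<and> j = succ_idx n p i then 1 else 0)"
    if "a \<in> {1..p}" for a
    using eidx_eq_iff[OF that] eidx_aidx_kidx[of i]
    unfolding Lam_def succ_idx_def by (smt (verit))
  have "Ups n p i j = (\<Sum>a\<in>{1..p}. if a = aidx n p i then (if j = succ_idx n p i then 1 else 0) else 0)"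
    unfolding Ups_def by (intro sum.cong refl) (simp add: Lam)
  thus ?thesis using aidx_range[of i] by simp
qed

lemma row_finite_Ups: "row_finite (Ups n p)"
  unfolding row_finite_def Ups_eq by (auto intro: finite_subset[of _ "{succ_idx n p i}" for i])

lemma Ups_mult: "smat_mult (Ups n p) B i j = B (succ_idx n p i) j"
  by (subst smat_mult_eq_sum[of "{succ_idx n p i}"]) (auto simp: Ups_eq split: if_splits)

lemma mult_transpose_Ups: "smat_mult B (smat_transpose (Ups n p)) i j = B i (succ_idx n p j)"
  by (subst smat_mult_eq_sum[of "{succ_idx n p j}"])
     (auto simp: Ups_eq smat_transpose_def split: if_splits)

lemma Ups_mult_chi_coeffs:
  "smat_mult (Ups n p) (chi_coeffs n p a) = (\<lambda>i m. if m = 0 then 0 else chi_coeffs n p a i (m - 1))"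
  by (intro ext) (auto simp: Ups_mult chi_coeffs_def)

lemma col_finite_chistar_coeffs: "col_finite (chistar_coeffs n p b)"
  unfolding col_finite_def
proof
  fix m
  have "{k. chistar_coeffs n p b k m \<noteq> 0} \<subseteq> {eidx n p b (m - 1)}"
    using eidx_aidx_kidx unfolding chistar_coeffs_def by (auto split: if_splits)
  thus "finite {k. chistar_coeffs n p b k m \<noteq> 0}" by (rule finite_subset) simp
qed

text \<open>$\Upsilon^\top$ shifts $\chi^*_b$ down one power of $z^{-1}$; only the first
  entry $e_b(0) z^{-1}$ has no preimage and is lost.\<close>
lemma transpose_Ups_mult_chistar_coeffs:
  assumes b: "b \<in> {1..p}"
  shows "smat_mult (smat_transpose (Ups n p)) (chistar_coeffs n p b) i m
     = chistar_coeffs n p b i (Suc m) - (if m = 0 \<and> i = eidx n p b 0 then 1 else 0)"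
proof (cases "kidx n p i")
  case 0
  have "smat_mult (smat_transpose (Ups n p)) (chistar_coeffs n p b) i m = 0"
    using 0 by (subst smat_mult_eq_sum[of "{}"]) (auto simp: smat_transpose_def Ups_eq split: if_splits)
  moreover have "i = eidx n p b 0 \<longleftrightarrow> aidx n p i = b"
    using eidx_eq_iff[OF b, of i 0] 0 by simp
  ultimately show ?thesis using 0 unfolding chistar_coeffs_def by auto
next
  case (Suc k)
  define j where "j = eidx n p (aidx n p i) k"
  have j: "aidx n p j = aidx n p i" "kidx n p j = k"
    unfolding j_def using aidx_eidx kidx_eidx aidx_range by auto
  hence "succ_idx n p j = i"
    unfolding succ_idx_def using Suc eidx_aidx_kidx[of i] by simp
  hence "smat_mult (smat_transpose (Ups n p)) (chistar_coeffs n p b) i m = chistar_coeffs n p b j m"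
    using inj_succ_idx
    by (subst smat_mult_eq_sum[of "{j}"]) (auto simp: smat_transpose_def Ups_eq dest: injD split: if_splits)
  moreover have "i \<noteq> eidx n p b 0" using kidx_eidx[OF b, of 0] Suc by auto
  ultimately show ?thesis using j Suc unfolding chistar_coeffs_def by auto
qed

lemma mv_poly_conj_Ups_chi:
  assumes P: "row_finite P" and Q: "row_finite Q" and QP: "smat_mult Q P = smat_id"
  shows "mv_poly (smat_mult P (smat_mult (Ups n p) Q)) (mv_poly P (chi n p a)) i
       = [:0, 1:] * mv_poly P (chi n p a) i"
proof (rule poly_eqI)
  fix m
  let ?J = "smat_mult P (smat_mult (Ups n p) Q)" and ?X = "chi_coeffs n p a"
  have coeffs: "(\<lambda>k. coeff (mv_poly P (chi n p a) k)) = smat_mult P ?X"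
    using P by (intro ext) (simp add: coeff_mv_poly coeff_chi)
  have "row_finite ?J" using P Q row_finite_Ups by (simp add: row_finite_mult)
  hence "coeff (mv_poly ?J (mv_poly P (chi n p a)) i) m = smat_mult ?J (smat_mult P ?X) i m"
    by (simp add: coeff_mv_poly coeffs)
  also have "smat_mult ?J (smat_mult P ?X) = smat_mult P (smat_mult (Ups n p) (smat_mult (smat_mult Q P) ?X))"
    using P Q row_finite_Ups by (simp add: row_finite_mult smat_mult_assoc_row_finite)
  also have "\<dots> i m = (if m = 0 then 0 else smat_mult P ?X i (m - 1))"
    unfolding QP smat_mult_id_left Ups_mult_chi_coeffs by (simp add: smat_mult_def)
  also have "\<dots> = coeff ([:0, 1:] * mv_poly P (chi n p a) i) m"
    using P by (simp add: coeff_pCons' coeff_mv_poly coeff_chi)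
  finally show "coeff (mv_poly ?J (mv_poly P (chi n p a)) i) m = coeff ([:0, 1:] * mv_poly P (chi n p a) i) m" .
qed

lemma mv_fps_conj_transpose_Ups_chistar:
  assumes P: "col_finite P" and Q: "col_finite Q" and QP: "smat_mult Q P = smat_id"
    and b: "b \<in> {1..p}"
  shows "fps_to_fls (mv_fps (smat_mult P (smat_mult (smat_transpose (Ups n p)) Q)) (mv_fps P (chistar n p b)) i)
       = fls_X_inv * fps_to_fls (mv_fps P (chistar n p b) i) - fls_const (P i (eidx n p b 0))"
proof -
  let ?U = "smat_transpose (Ups n p)" and ?Y = "chistar_coeffs n p b"
  let ?e = "\<lambda>k m. if m = 0 \<and> k = eidx n p b 0 then 1 else 0 :: real"
  have "smat_mult (smat_mult P (smat_mult ?U Q)) (smat_mult P ?Y)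
      = smat_mult P (smat_mult ?U (smat_mult (smat_mult Q P) ?Y))"
    using P Q col_finite_chistar_coeffs row_finite_Ups
    by (simp add: col_finite_mult smat_mult_assoc_col_finite)
  moreover have coeffs: "(\<lambda>k. fps_nth (mv_fps P (chistar n p b) k)) = smat_mult P ?Y"
    by (intro ext) (simp add: fps_nth_mv_fps fps_nth_chistar)
  ultimately have conj: "fps_nth (mv_fps (smat_mult P (smat_mult ?U Q)) (mv_fps P (chistar n p b)) i) m
      = smat_mult P (smat_mult ?U ?Y) i m" for m
    by (simp add: fps_nth_mv_fps QP)
  have shifted: "smat_mult P (smat_mult ?U ?Y) i m
      = smat_mult P ?Y i (Suc m) - (if m = 0 then P i (eidx n p b 0) else 0)" for m
  proof -
    define F where "F = insert (eidx n p b 0) {k. ?Y k (Suc m) \<noteq> 0}"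
    have F: "finite F"
      unfolding F_def using col_finite_chistar_coeffs unfolding col_finite_def by auto
    have "smat_mult P (smat_mult ?U ?Y) i m = (\<Sum>k\<in>F. P i k * smat_mult ?U ?Y k m)"
      by (rule smat_mult_eq_sum[OF F])
         (auto simp: F_def transpose_Ups_mult_chistar_coeffs[OF b] split: if_splits)
    also have "\<dots> = (\<Sum>k\<in>F. P i k * ?Y k (Suc m)) - (\<Sum>k\<in>F. P i k * ?e k m)"
      by (simp add: transpose_Ups_mult_chistar_coeffs[OF b] right_diff_distrib sum_subtractf)
    also have "(\<Sum>k\<in>F. P i k * ?Y k (Suc m)) = smat_mult P ?Y i (Suc m)"
      by (rule smat_mult_eq_sum[OF F, symmetric]) (auto simp: F_def)
    also have "(\<Sum>k\<in>F. P i k * ?e k m) = (if m = 0 then P i (eidx n p b 0) else 0)"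
      using F by (auto simp: F_def if_distrib cong: if_cong)
    finally show ?thesis .
  qed
  have "smat_mult P ?Y i 0 = 0"
    unfolding smat_mult_def chistar_coeffs_def by simp
  show ?thesis
    unfolding fls_eq_iff
  proof
    fix k :: int
    show "fls_nth (fps_to_fls (mv_fps (smat_mult P (smat_mult ?U Q)) (mv_fps P (chistar n p b)) i)) k
        = fls_nth (fls_X_inv * fps_to_fls (mv_fps P (chistar n p b) i) - fls_const (P i (eidx n p b 0))) k"
    proof (cases "k < 0")
      case True
      with \<open>smat_mult P ?Y i 0 = 0\<close> show ?thesis
        by (simp add: fls_X_inv_times_conv_shift fun_cong[OF coeffs])
    next
      case False
      then obtain m where "k = int m" by (metis nonneg_int_cases not_less)
      moreover have "nat (int m + 1) = Suc m" by simp
      ultimately show ?thesis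
        by (simp add: fls_X_inv_times_conv_shift conj shifted fun_cong[OF coeffs])
    qed
  qed
qed

end

lemma Ups_intertwines_Hankel:
  assumes "composition n1 p1" "composition n2 p2"
  shows "smat_mult (Ups n1 p1) (\<lambda>i j. F (aidx n1 p1 i) (aidx n2 p2 j) (kidx n1 p1 i + kidx n2 p2 j))
       = smat_mult (\<lambda>i j. F (aidx n1 p1 i) (aidx n2 p2 j) (kidx n1 p1 i + kidx n2 p2 j))
           (smat_transpose (Ups n2 p2))"
  by (intro ext) (simp add: composition.Ups_mult[OF assms(1)] composition.mult_transpose_Ups[OF assms(2)]
      composition.aidx_succ_idx composition.kidx_succ_idx assms)

theorem proposition2p14:
  fixes M :: "real measure" and I :: "real set"
    and p1 p2 :: nat and n1 n2 :: "nat \<Rightarrow> nat"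
    and w1 w2 :: "nat \<Rightarrow> real \<Rightarrow> real"
    and S Sinv Sbar Sbarinv :: smat
  assumes interval: "is_interval I"
    and sets_M: "sets M = sets (restrict_space borel I)"
    and finite_M: "finite_measure M"
    and p1: "p1 \<ge> 1" and p2: "p2 \<ge> 1"
    and n1: "\<forall>a\<in>{1..p1}. n1 a \<ge> 1" and n2: "\<forall>b\<in>{1..p2}. n2 b \<ge> 1"
    and moments: "\<forall>k. \<forall>a\<in>{1..p1}. \<forall>b\<in>{1..p2}.
                    integrable M (\<lambda>x. x ^ k * w1 a x * w2 b x)"
    and S_lower: "lower_tri S" and S_unit: "\<forall>i. S i i = 1"
    and Sinv_lower: "lower_tri Sinv"
    and Sinv: "smat_mult S Sinv = smat_id" "smat_mult Sinv S = smat_id"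
    and Sbar_upper: "upper_tri Sbar" and Sbar_diag: "\<forall>i. Sbar i i \<noteq> 0"
    and Sbarinv_upper: "upper_tri Sbarinv"
    and Sbarinv: "smat_mult Sbar Sbarinv = smat_id" "smat_mult Sbarinv Sbar = smat_id"
    and gauss_borel: "(\<lambda>i j. integral\<^sup>L M (\<lambda>x. x ^ (kidx n1 p1 i + kidx n2 p2 j)
                         * w1 (aidx n1 p1 i) x * w2 (aidx n2 p2 j) x))
                      = smat_mult Sinv Sbar"
  shows "let J = smat_mult (smat_mult S (Ups n1 p1)) Sinv;
             A = (\<lambda>a. mv_poly S (chi n1 p1 a));
             Abar = (\<lambda>b. mv_poly (smat_transpose Sbarinv) (chi n2 p2 b));
             C = (\<lambda>b. mv_fps Sbar (chistar n2 p2 b));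
             Cbar = (\<lambda>a. mv_fps (smat_transpose Sinv) (chistar n1 p1 a));
             c = (\<lambda>b i. Sbar i (eidx n2 p2 b 0));
             cbar = (\<lambda>a i. Sinv (eidx n1 p1 a 0) i)
         in J = smat_mult (smat_mult Sbar (smat_transpose (Ups n2 p2))) Sbarinv
          \<and> (\<forall>a\<in>{1..p1}. \<forall>i. mv_poly J (A a) i = [:0, 1:] * A a i)
          \<and> (\<forall>b\<in>{1..p2}. \<forall>i. mv_poly (smat_transpose J) (Abar b) i = [:0, 1:] * Abar b i)
          \<and> (\<forall>b\<in>{1..p2}. \<forall>i. fps_to_fls (mv_fps J (C b) i)
                 = fls_X_inv * fps_to_fls (C b i) - fls_const (c b i))
          \<and> (\<forall>a\<in>{1..p1}. \<forall>i. fps_to_fls (mv_fps (smat_transpose J) (Cbar a) i)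
                 = fls_X_inv * fps_to_fls (Cbar a i) - fls_const (cbar a i))"
proof -
  interpret c1: composition n1 p1 using p1 n1 by unfold_locales
  interpret c2: composition n2 p2 using p2 n2 by unfold_locales
  let ?U1 = "Ups n1 p1" and ?U2 = "Ups n2 p2"
  define J where "J = smat_mult (smat_mult S ?U1) Sinv"
  have fin: "row_finite S" "row_finite Sinv" "col_finite Sbar" "col_finite Sbarinv"
    using S_lower Sinv_lower Sbar_upper Sbarinv_upper
    by (simp_all add: lower_tri_row_finite upper_tri_col_finite)
  have "smat_mult ?U1 (smat_mult Sinv Sbar) = smat_mult (smat_mult Sinv Sbar) (smat_transpose ?U2)"
    unfolding gauss_borel[symmetric]
    by (rule Ups_intertwines_Hankel[OF c1.composition_axioms c2.composition_axioms,
          where F = "\<lambda>a b k. integral\<^sup>L M (\<lambda>x. x ^ k * w1 a x * w2 b x)"])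
  hence J_bar: "J = smat_mult (smat_mult Sbar (smat_transpose ?U2)) Sbarinv"
    unfolding J_def using fin Sinv(1) Sbarinv(1) c1.row_finite_Ups c2.row_finite_Ups
    by (intro conj_eq_if_intertwines) simp_all
  have J: "J = smat_mult S (smat_mult ?U1 Sinv)"
    unfolding J_def using fin(1) c1.row_finite_Ups by (rule smat_mult_assoc_row_finite)
  have J_bar': "J = smat_mult Sbar (smat_mult (smat_transpose ?U2) Sbarinv)"
    unfolding J_bar using fin c2.row_finite_Ups by (intro smat_mult_assoc_col_finite) simp_all
  have JT: "smat_transpose J = smat_mult (smat_transpose Sinv) (smat_mult (smat_transpose ?U1) (smat_transpose S))"
    unfolding J_def by (simp add: smat_transpose_mult)
  have JT_bar: "smat_transpose J = smat_mult (smat_transpose Sbarinv) (smat_mult ?U2 (smat_transpose Sbar))"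
    unfolding J_bar by (simp add: smat_transpose_mult)
  have inv_transpose: "smat_mult (smat_transpose S) (smat_transpose Sinv) = smat_id"
    "smat_mult (smat_transpose Sbar) (smat_transpose Sbarinv) = smat_id"
    using Sinv(2) Sbarinv(2) by (metis smat_transpose_mult smat_transpose_id)+
  show ?thesis
    unfolding Let_def J_def[symmetric]
    using J_bar fin
      c1.mv_poly_conj_Ups_chi[OF fin(1,2) Sinv(2), folded J]
      c2.mv_poly_conj_Ups_chi[OF _ _ inv_transpose(2), folded JT_bar]
      c2.mv_fps_conj_transpose_Ups_chistar[OF fin(3,4) Sbarinv(2), folded J_bar']
      c1.mv_fps_conj_transpose_Ups_chistar[OF _ _ inv_transpose(1), folded JT]
    by (simp add: smat_transpose_apply)
qed

end
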